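(* As $n\to\infty$, $$E\Bigl[\Bigl(\frac{\widehat H_n}{h_n}-1\Bigr)^2\Bigr]\to 0,$$ i.e. $\widehat H_n/h_n\to1$ in quadratic mean. In particular $E[\widehat H_n]/h_n\to 1$.
   Context: $X$ is a positive random variable with survival function $S(x)=P(X>x)$ satisfying $S(x)>0$ for all $x\ge0$. Write $S_-(x)=P(X\ge x)$. For each integer $n\ge1$, the theoretical $h$-index is $$h_n=\sup\{x\ge 0:\ nS_-(x)\ge x\}.$$ Let $X_1,\dots,X_n$ be independent copies of $X$, and write $\widehat S_{n-}(x)=\frac1n\sum_{i=1}^n\mathbf 1\{X_i\ge x\}$. The empirical $h$-index is $$\widehat H_n=\sup\{x\ge0:\ n\widehat S_{n-}(x)\ge x\}.$$ *)

theory Defs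
  imports "HOL-Probability.Probability"
begin

definition hidx :: "(real \<Rightarrow> real) \<Rightarrow> real" where
  "hidx G = Sup {x. 0 \<le> x \<and> x \<le> G x}"

definition theo_h :: "'a measure \<Rightarrow> ('a \<Rightarrow> real) \<Rightarrow> nat \<Rightarrow> real" where
  "theo_h M X n = hidx (\<lambda>x. real n * measure M {\<omega> \<in> space M. X \<omega> \<ge> x})"

text \<open>Empirical h-index from the sample X 0, ..., X (n-1):
  n * empirical S_-(x) is the number of i < n with X i \<ge> x.\<close>
definition emp_h :: "(nat \<Rightarrow> 'a \<Rightarrow> real) \<Rightarrow> nat \<Rightarrow> 'a \<Rightarrow> real" where
  "emp_h X n \<omega> = hidx (\<lambda>x. real (card {i. i < n \<and> X i \<omega> \<ge> x}))"

end

theory Submission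
  imports Defs "HOL-Real_Asymp.Real_Asymp"
begin

(* Both h_n and H_n are h-indices hidx G = sup {x >= 0. x <= G x} of antitone, bounded
   "tail count" functions: G x = n P(X >= x) for h_n and G x = N_n(x) = #{i < n. X_i >= x}
   for H_n.  For such G the h-index is trapped by the values of G at any point
   (bounded_antitone.hidx_le_max / hidx_ge_min), while G a > a below and G b < b above it.
   Comparing H_n with h_n at a = h_n - 1 and b = h_n + 1 therefore bounds |H_n - h_n| by
   1 + |N_n(b) - n P(X >= b)| + c |N_n(a) - n P(X >= a)|  with c = a / (n P(X >= a)) <= 1
   (lemma h_index_deviation).  N_n(x) is binomial, so E[(N_n(x) - n P(X >= x))^2] <= n P(X >= x)
   (exceedances_mean_square), which yields E[(H_n/h_n - 1)^2] <= 3 (1 + 2 h_n) / h_n^2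
   (quadratic_risk_bound).  Since P(X > x) > 0 for all x >= 0, h_n -> infinity, so the quadratic
   risk tends to 0; convergence of the mean follows because (E Z)^2 <= E[Z^2]. *)

section \<open>The h-index of an antitone bounded function\<close>

locale bounded_antitone =
  fixes G :: "real \<Rightarrow> real" and B :: real
  assumes antitone: "\<And>x y. x \<le> y \<Longrightarrow> G y \<le> G x"
    and nonneg: "\<And>x. 0 \<le> G x"
    and bounded: "\<And>x. G x \<le> B"
begin

lemma hidx_set_bdd: "bdd_above {x. 0 \<le> x \<and> x \<le> G x}"
  by (rule bdd_aboveI[where M = B]) (use bounded order.trans in blast)

lemma hidx_set_nonempty: "{x. 0 \<le> x \<and> x \<le> G x} \<noteq> {}"
  using nonneg[of 0] by blast

lemma hidx_ge: "0 \<le> y \<Longrightarrow> y \<le> G y \<Longrightarrow> y \<le> hidx G"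
  unfolding hidx_def by (rule cSup_upper) (use hidx_set_bdd in auto)

lemma hidx_nonneg: "0 \<le> hidx G"
  using hidx_ge[of 0] nonneg by simp

lemma hidx_le_bound: "hidx G \<le> B"
  unfolding hidx_def by (rule cSup_least[OF hidx_set_nonempty]) (use bounded order.trans in blast)

lemma hidx_witness:
  assumes "a < hidx G"
  obtains y where "a < y" "0 \<le> y" "y \<le> G y"
  using less_cSupD[OF hidx_set_nonempty assms[unfolded hidx_def]] by blast

lemma less_below_hidx:
  assumes "a < hidx G"
  shows "a < G a"
proof -
  obtain y where "a < y" "y \<le> G y" using hidx_witness[OF assms] by blast
  then show ?thesis using antitone[of a y] by linarith
qed

lemma greater_above_hidx: "hidx G < y \<Longrightarrow> G y < y"
  using hidx_ge[of y] hidx_nonneg by fastforce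

lemma hidx_le_max: "hidx G \<le> max b (G b)"
  unfolding hidx_def
proof (rule cSup_least[OF hidx_set_nonempty])
  fix x assume "x \<in> {x. 0 \<le> x \<and> x \<le> G x}"
  then show "x \<le> max b (G b)"
    using antitone[of b x] by (cases "x \<le> b") auto
qed

lemma hidx_ge_min: "0 \<le> a \<Longrightarrow> min a (G a) \<le> hidx G"
  using antitone[of "min a (G a)" a] nonneg[of a] by (intro hidx_ge) auto

end

text \<open>The h-index of a measurable family of antitone functions is measurable: its
  superlevel sets are countable unions over rational levels.\<close>
lemma measurable_hidx:
  fixes G :: "'a \<Rightarrow> real \<Rightarrow> real"
  assumes antitone: "\<And>\<omega>. bounded_antitone (G \<omega>) B"
    and meas: "\<And>x. (\<lambda>\<omega>. G \<omega> x) \<in> borel_measurable M"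
  shows "(\<lambda>\<omega>. hidx (G \<omega>)) \<in> borel_measurable M"
proof (unfold borel_measurable_iff_greater, intro allI)
  fix a :: real
  define Q where "Q = {q :: real. q \<in> \<rat> \<and> a < q \<and> 0 \<le> q}"
  have "{\<omega> \<in> space M. a < hidx (G \<omega>)} = (\<Union>q\<in>Q. {\<omega> \<in> space M. q \<le> G \<omega> q})"
  proof (intro equalityI subsetI)
    fix \<omega> assume "\<omega> \<in> {\<omega> \<in> space M. a < hidx (G \<omega>)}"
    then have \<omega>: "\<omega> \<in> space M" "a < hidx (G \<omega>)" by auto
    interpret bounded_antitone "G \<omega>" B by (rule antitone)
    obtain y where y: "a < y" "0 \<le> y" "y \<le> G \<omega> y" using hidx_witness[OF \<omega>(2)] .
    obtain q where q: "q \<in> Q" "q \<le> y"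
    proof (cases "a < 0")
      case True
      then show ?thesis using that[of 0] y by (auto simp: Q_def)
    next
      case False
      obtain q where "q \<in> \<rat>" "a < q" "q < y" using Rats_dense_in_real[OF y(1)] by blast
      then show ?thesis using that[of q] False by (auto simp: Q_def)
    qed
    have "q \<le> G \<omega> q" using y(3) antitone[OF q(2)] q(2) by linarith
    then show "\<omega> \<in> (\<Union>q\<in>Q. {\<omega> \<in> space M. q \<le> G \<omega> q})" using \<omega>(1) q(1) by blast
  next
    fix \<omega> assume "\<omega> \<in> (\<Union>q\<in>Q. {\<omega> \<in> space M. q \<le> G \<omega> q})"
    then obtain q where q: "q \<in> Q" "\<omega> \<in> space M" "q \<le> G \<omega> q" by blast
    interpret bounded_antitone "G \<omega>" B by (rule antitone)
    show "\<omega> \<in> {\<omega> \<in> space M. a < hidx (G \<omega>)}"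
      using q hidx_ge[of q] unfolding Q_def by fastforce
  qed
  moreover have "(\<Union>q\<in>Q. {\<omega> \<in> space M. q \<le> G \<omega> q}) \<in> sets M"
  proof (rule sets.countable_UN'')
    show "countable Q" unfolding Q_def by (rule countable_subset[OF _ countable_rat]) blast
    show "{\<omega> \<in> space M. q \<le> G \<omega> q} \<in> sets M" for q using meas[of q] by measurable
  qed
  ultimately show "{\<omega> \<in> space M. a < hidx (G \<omega>)} \<in> sets M" by simp
qed

section \<open>A deterministic comparison of two h-indices\<close>

lemma square_sum3_le: "(x + y + z)\<^sup>2 \<le> 3 * (x\<^sup>2 + y\<^sup>2 + (z :: real)\<^sup>2)"
proof -
  have "3 * (x\<^sup>2 + y\<^sup>2 + z\<^sup>2) - (x + y + z)\<^sup>2 = (x - y)\<^sup>2 + (y - z)\<^sup>2 + (x - z)\<^sup>2"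
    by (simp add: power2_eq_square algebra_simps)
  then show ?thesis by (smt (verit) zero_le_power2)
qed

text \<open>If H is trapped as in bounded_antitone.hidx_le_max / hidx_ge_min by the values u, v
  of some function at h + 1 and h - 1, and q, p are the values there of a function whose
  h-index is h, then H deviates from h by at most 1 plus the deviations u - q, v - p
  (the latter damped by the factor (h - 1) / p \<le> 1).\<close>
lemma h_index_deviation:
  fixes H h u v p q :: real
  assumes upper: "H \<le> max (h + 1) u" and lower: "min (h - 1) v \<le> H" and v: "0 \<le> v"
    and q: "q < h + 1" and p: "h - 1 < p" and h: "2 \<le> h"
  shows "\<bar>H - h\<bar> \<le> 1 + \<bar>u - q\<bar> + (h - 1) / p * \<bar>v - p\<bar>"
proof -
  define c where "c = (h - 1) / p"
  have c: "0 \<le> c" "c \<le> 1" "c * p = h - 1" using p h by (auto simp: c_def)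
  have "H - h \<le> 1 + \<bar>u - q\<bar>" using upper q abs_ge_self[of "u - q"] by (simp add: max_def split: if_splits)
  moreover have "h - H \<le> 1 + c * \<bar>v - p\<bar>"
  proof (cases "h - 1 \<le> v")
    case True
    then show ?thesis using lower mult_nonneg_nonneg[OF c(1) abs_ge_zero[of "v - p"]]
      by (simp add: min_def)
  next
    case False
    have "h - H \<le> 1 + (h - 1 - v)" using lower False by (simp add: min_def)
    also have "\<dots> \<le> 1 + c * (p - v)"
      using c v mult_left_le_one_le[OF v c(1,2)] by (simp add: right_diff_distrib)
    also have "\<dots> \<le> 1 + c * \<bar>v - p\<bar>" using c by (intro add_left_mono mult_left_mono) auto
    finally show ?thesis .
  qed
  moreover have "0 \<le> c * \<bar>v - p\<bar>" using c by simp
  ultimately show ?thesis unfolding c_def by (simp add: abs_le_iff)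
qed

lemma h_index_relative_error:
  fixes H h u v p q :: real
  assumes "H \<le> max (h + 1) u" "min (h - 1) v \<le> H" "0 \<le> v" "q < h + 1" "h - 1 < p" "2 \<le> h"
  shows "(H / h - 1)\<^sup>2 \<le> 3 * (1 + (u - q)\<^sup>2 + ((h - 1) / p)\<^sup>2 * (v - p)\<^sup>2) / h\<^sup>2"
proof -
  let ?c = "(h - 1) / p"
  have "(H - h)\<^sup>2 \<le> (1 + \<bar>u - q\<bar> + ?c * \<bar>v - p\<bar>)\<^sup>2"
    using power_mono[OF h_index_deviation[OF assms] abs_ge_zero, of 2] by simp
  also have "\<dots> \<le> 3 * (1\<^sup>2 + \<bar>u - q\<bar>\<^sup>2 + (?c * \<bar>v - p\<bar>)\<^sup>2)"
    by (rule square_sum3_le)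
  also have "\<dots> = 3 * (1 + (u - q)\<^sup>2 + ?c\<^sup>2 * (v - p)\<^sup>2)"
    by (simp only: power_mult_distrib power2_abs power_one)
  moreover have "(H / h - 1)\<^sup>2 = (H - h)\<^sup>2 / h\<^sup>2" using \<open>2 \<le> h\<close> by (simp add: field_simps)
  ultimately show ?thesis by (simp add: divide_right_mono)
qed

section \<open>Exceedance counts of an i.i.d. sample\<close>

locale iid_sample = prob_space M for M :: "'a measure" +
  fixes X :: "nat \<Rightarrow> 'a \<Rightarrow> real"
  assumes measurable_X[measurable]: "\<And>i. X i \<in> borel_measurable M"
    and indep: "indep_vars (\<lambda>_. borel) X UNIV"
    and ident: "\<And>i. distr M borel (X i) = distr M borel (X 0)"
begin

definition surv :: "real \<Rightarrow> real" where
  "surv x = prob {\<omega> \<in> space M. x \<le> X 0 \<omega>}"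

definition exceeds :: "nat \<Rightarrow> real \<Rightarrow> 'a \<Rightarrow> real" where
  "exceeds i x \<omega> = of_bool (x \<le> X i \<omega>)"

definition exceedances :: "nat \<Rightarrow> real \<Rightarrow> 'a \<Rightarrow> real" where
  "exceedances n x \<omega> = (\<Sum>i<n. exceeds i x \<omega>)"

lemma exceeds_bounds: "0 \<le> exceeds i x \<omega>" "exceeds i x \<omega> \<le> 1"
  by (simp_all add: exceeds_def)

lemma measurable_exceeds[measurable]: "exceeds i x \<in> borel_measurable M"
  unfolding exceeds_def by measurable

lemma measurable_exceedances[measurable]: "exceedances n x \<in> borel_measurable M"
  unfolding exceedances_def by measurable

lemma emp_h_eq: "emp_h X n \<omega> = hidx (\<lambda>x. exceedances n x \<omega>)"
  unfolding emp_h_def exceedances_def exceeds_def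
  by (simp add: sum_of_bool_eq Int_def conj_commute lessThan_def)

lemma theo_h_eq: "theo_h M (X 0) n = hidx (\<lambda>x. real n * surv x)"
  unfolding theo_h_def surv_def by simp

lemma surv_antitone: "x \<le> y \<Longrightarrow> surv y \<le> surv x"
  unfolding surv_def by (rule finite_measure_mono) auto

lemma surv_bounds: "0 \<le> surv x" "surv x \<le> 1"
  unfolding surv_def by auto

lemma bounded_antitone_surv: "bounded_antitone (\<lambda>x. real n * surv x) (real n)"
  by unfold_locales
    (use surv_antitone surv_bounds in \<open>auto intro: mult_left_mono mult_left_le\<close>)

lemma bounded_antitone_exceedances: "bounded_antitone (\<lambda>x. exceedances n x \<omega>) (real n)"
proof
  show "exceedances n y \<omega> \<le> exceedances n x \<omega>" if "x \<le> y" for x y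
    unfolding exceedances_def using that by (intro sum_mono) (simp add: exceeds_def)
  show "0 \<le> exceedances n x \<omega>" for x
    unfolding exceedances_def by (intro sum_nonneg) (simp add: exceeds_bounds)
  show "exceedances n x \<omega> \<le> real n" for x
    unfolding exceedances_def using sum_bounded_above[of "{..<n}" "\<lambda>i. exceeds i x \<omega>" 1]
    by (simp add: exceeds_bounds)
qed

lemma prob_exceed: "prob {\<omega> \<in> space M. x \<le> X i \<omega>} = surv x"
proof -
  have "prob {\<omega> \<in> space M. x \<le> X i \<omega>} = measure (distr M borel (X i)) {x..}"
    by (subst measure_distr) (auto intro!: arg_cong[where f = "measure M"])
  also have "\<dots> = measure (distr M borel (X 0)) {x..}" by (subst ident[of i]) (rule refl)
  also have "\<dots> = surv x" unfolding surv_def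
    by (subst measure_distr) (auto intro!: arg_cong[where f = "measure M"])
  finally show ?thesis .
qed

lemma expectation_exceeds: "expectation (exceeds i x) = surv x"
proof -
  have "expectation (exceeds i x) = expectation (indicator {\<omega> \<in> space M. x \<le> X i \<omega>})"
    by (rule Bochner_Integration.integral_cong) (auto simp: exceeds_def)
  then show ?thesis using prob_exceed by simp
qed

lemma integrable_exceeds: "integrable M (exceeds i x)"
  by (rule integrable_const_bound[where B = 1]) (auto simp: exceeds_def)

lemma centred_exceeds_uncorrelated:
  assumes "i \<noteq> j"
  shows "expectation (\<lambda>\<omega>. (exceeds i x \<omega> - surv x) * (exceeds j x \<omega> - surv x)) = 0"
proof -
  define Y where "Y = (\<lambda>(k :: nat) (y :: real). of_bool (x \<le> y) - surv x)"
  have Y_int: "integrable M (\<lambda>\<omega>. Y k (X k \<omega>))" for k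
    unfolding Y_def by (rule integrable_const_bound[where B = "1 + \<bar>surv x\<bar>"]) auto
  have "indep_vars (\<lambda>_. borel) (\<lambda>k \<omega>. Y k (X k \<omega>)) {i, j}"
    by (rule indep_vars_compose2[OF indep_vars_subset[OF indep]]) (auto simp: Y_def)
  then have "expectation (\<lambda>\<omega>. \<Prod>k\<in>{i, j}. Y k (X k \<omega>))
      = (\<Prod>k\<in>{i, j}. expectation (\<lambda>\<omega>. Y k (X k \<omega>)))"
    by (intro indep_vars_lebesgue_integral Y_int) auto
  moreover have "expectation (\<lambda>\<omega>. Y i (X i \<omega>)) = 0"
    using expectation_exceeds[of i x] integrable_exceeds[of i x]
    by (simp add: Y_def exceeds_def[symmetric] prob_space)
  ultimately show ?thesis using assms by (simp add: Y_def exceeds_def)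
qed

lemma centred_exceeds_square:
  "expectation (\<lambda>\<omega>. (exceeds i x \<omega> - surv x) * (exceeds i x \<omega> - surv x)) = surv x - (surv x)\<^sup>2"
proof -
  have "(\<lambda>\<omega>. (exceeds i x \<omega> - surv x) * (exceeds i x \<omega> - surv x))
      = (\<lambda>\<omega>. (1 - 2 * surv x) * exceeds i x \<omega> + (surv x)\<^sup>2)"
    by (auto simp: exceeds_def power2_eq_square algebra_simps)
  then show ?thesis using integrable_exceeds[of i x] expectation_exceeds[of i x]
    by (simp add: prob_space power2_eq_square algebra_simps)
qed

lemma exceedances_mean_square:
  "expectation (\<lambda>\<omega>. (exceedances n x \<omega> - real n * surv x)\<^sup>2) \<le> real n * surv x"
proof -
  let ?Y = "\<lambda>i \<omega>. exceeds i x \<omega> - surv x"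
  have square: "(exceedances n x \<omega> - real n * surv x)\<^sup>2 = (\<Sum>i<n. \<Sum>j<n. ?Y i \<omega> * ?Y j \<omega>)" for \<omega>
  proof -
    have "exceedances n x \<omega> - real n * surv x = (\<Sum>i<n. ?Y i \<omega>)"
      by (simp add: exceedances_def sum_subtractf)
    then show ?thesis by (simp add: power2_eq_square sum_product)
  qed
  have "integrable M (\<lambda>\<omega>. ?Y i \<omega> * ?Y j \<omega>)" for i j
    by (rule integrable_const_bound[where B = 1])
      (use surv_bounds[of x] in \<open>auto simp: exceeds_def abs_mult intro!: mult_le_one\<close>)
  then have "expectation (\<lambda>\<omega>. (exceedances n x \<omega> - real n * surv x)\<^sup>2)
      = (\<Sum>i<n. \<Sum>j<n. expectation (\<lambda>\<omega>. ?Y i \<omega> * ?Y j \<omega>))"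
    unfolding square by (simp add: integrable_sum)
  also have "\<dots> = (\<Sum>i<n. expectation (\<lambda>\<omega>. ?Y i \<omega> * ?Y i \<omega>))"
  proof (rule sum.cong[OF refl])
    fix i assume "i \<in> {..<n}"
    then show "(\<Sum>j<n. expectation (\<lambda>\<omega>. ?Y i \<omega> * ?Y j \<omega>))
        = expectation (\<lambda>\<omega>. ?Y i \<omega> * ?Y i \<omega>)"
      using centred_exceeds_uncorrelated[of i _ x]
      by (subst sum.mono_neutral_right[of "{..<n}" "{i}"]) auto
  qed
  also have "\<dots> = real n * (surv x - (surv x)\<^sup>2)"
    by (simp add: centred_exceeds_square)
  also have "\<dots> \<le> real n * surv x" by (simp add: mult_left_mono)
  finally show ?thesis .
qed

lemma integrable_exceedances_square:
  "integrable M (\<lambda>\<omega>. (exceedances n x \<omega> - real n * surv x)\<^sup>2)"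
proof (rule integrable_const_bound[where B = "(real n)\<^sup>2"])
  show "AE \<omega> in M. norm ((exceedances n x \<omega> - real n * surv x)\<^sup>2) \<le> (real n)\<^sup>2"
  proof (rule AE_I2)
    fix \<omega>
    interpret bounded_antitone "\<lambda>x. exceedances n x \<omega>" "real n"
      by (rule bounded_antitone_exceedances)
    have dev: "\<bar>exceedances n x \<omega> - real n * surv x\<bar> \<le> real n"
    proof -
      have "0 \<le> real n * surv x" "real n * surv x \<le> real n"
        using surv_bounds[of x] by (simp_all add: mult_left_le)
      then show ?thesis using nonneg[of x] bounded[of x] by (simp add: abs_le_iff)
    qed
    show "norm ((exceedances n x \<omega> - real n * surv x)\<^sup>2) \<le> (real n)\<^sup>2"
      using power_mono[OF dev abs_ge_zero, of 2] by simp
  qed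
qed simp

lemma measurable_emp_h[measurable]: "emp_h X n \<in> borel_measurable M"
  unfolding emp_h_eq by (rule measurable_hidx[OF bounded_antitone_exceedances]) simp

lemma emp_h_bounds: "0 \<le> emp_h X n \<omega>" "emp_h X n \<omega> \<le> real n"
proof -
  interpret bounded_antitone "\<lambda>x. exceedances n x \<omega>" "real n"
    by (rule bounded_antitone_exceedances)
  show "0 \<le> emp_h X n \<omega>" "emp_h X n \<omega> \<le> real n"
    unfolding emp_h_eq using hidx_nonneg hidx_le_bound by auto
qed

lemma integrable_emp_h: "integrable M (emp_h X n)"
  by (rule integrable_const_bound[where B = "real n"]) (use emp_h_bounds in auto)

lemma integrable_relative_error:
  "integrable M (\<lambda>\<omega>. (emp_h X n \<omega> / h - 1) ^ k)"
proof (rule integrable_const_bound[where B = "(real n / \<bar>h\<bar> + 1) ^ k"])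
  have ratio: "\<bar>emp_h X n \<omega> / h\<bar> \<le> real n / \<bar>h\<bar>" for \<omega>
    using emp_h_bounds[of n \<omega>] by (simp add: divide_right_mono)
  have "\<bar>emp_h X n \<omega> / h - 1\<bar> \<le> real n / \<bar>h\<bar> + 1" for \<omega>
    using abs_triangle_ineq4[of "emp_h X n \<omega> / h" 1] ratio[of \<omega>] by simp
  then show "AE \<omega> in M. norm ((emp_h X n \<omega> / h - 1) ^ k) \<le> (real n / \<bar>h\<bar> + 1) ^ k"
    by (auto simp: power_abs intro!: power_mono)
qed simp

lemma relative_error_pointwise:
  assumes h: "2 \<le> theo_h M (X 0) n"
  defines "h \<equiv> theo_h M (X 0) n"
  defines "D \<equiv> \<lambda>x \<omega>. exceedances n x \<omega> - real n * surv x"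
  shows "(emp_h X n \<omega> / h - 1)\<^sup>2
    \<le> 3 * (1 + (D (h + 1) \<omega>)\<^sup>2 + ((h - 1) / (real n * surv (h - 1)))\<^sup>2 * (D (h - 1) \<omega>)\<^sup>2) / h\<^sup>2"
proof -
  interpret T: bounded_antitone "\<lambda>x. real n * surv x" "real n" by (rule bounded_antitone_surv)
  interpret E: bounded_antitone "\<lambda>x. exceedances n x \<omega>" "real n"
    by (rule bounded_antitone_exceedances)
  have h_eq: "h = hidx (\<lambda>x. real n * surv x)" unfolding h_def by (rule theo_h_eq)
  have upper: "emp_h X n \<omega> \<le> max (h + 1) (exceedances n (h + 1) \<omega>)"
    unfolding emp_h_eq by (rule E.hidx_le_max)
  have lower: "min (h - 1) (exceedances n (h - 1) \<omega>) \<le> emp_h X n \<omega>"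
    unfolding emp_h_eq using h by (intro E.hidx_ge_min) (simp add: h_def)
  have q: "real n * surv (h + 1) < h + 1" unfolding h_eq by (rule T.greater_above_hidx) simp
  have p: "h - 1 < real n * surv (h - 1)" unfolding h_eq by (rule T.less_below_hidx) simp
  show ?thesis unfolding D_def
    using h_index_relative_error[OF upper lower E.nonneg q p] h by (simp add: h_def)
qed

lemma quadratic_risk_bound:
  assumes h2: "2 \<le> theo_h M (X 0) n"
  shows "expectation (\<lambda>\<omega>. (emp_h X n \<omega> / theo_h M (X 0) n - 1)\<^sup>2)
    \<le> 3 * (1 + 2 * theo_h M (X 0) n) / (theo_h M (X 0) n)\<^sup>2"
proof -
  define h where "h = theo_h M (X 0) n"
  define D where "D = (\<lambda>x \<omega>. exceedances n x \<omega> - real n * surv x)"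
  define p where "p = real n * surv (h - 1)"
  define c where "c = (h - 1) / p"
  have h2': "2 \<le> h" using h2 by (simp add: h_def)
  interpret T: bounded_antitone "\<lambda>x. real n * surv x" "real n" by (rule bounded_antitone_surv)
  have h_eq: "h = hidx (\<lambda>x. real n * surv x)" unfolding h_def by (rule theo_h_eq)
  have p: "h - 1 < p" unfolding p_def h_eq by (rule T.less_below_hidx) simp
  have q: "real n * surv (h + 1) < h + 1" unfolding h_eq by (rule T.greater_above_hidx) simp
  have int: "integrable M (\<lambda>\<omega>. (D x \<omega>)\<^sup>2)" for x
    unfolding D_def by (rule integrable_exceedances_square)
  have "expectation (\<lambda>\<omega>. (emp_h X n \<omega> / h - 1)\<^sup>2)
      \<le> expectation (\<lambda>\<omega>. 3 * (1 + (D (h + 1) \<omega>)\<^sup>2 + c\<^sup>2 * (D (h - 1) \<omega>)\<^sup>2) / h\<^sup>2)"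
  proof (rule integral_mono)
    show "integrable M (\<lambda>\<omega>. (emp_h X n \<omega> / h - 1)\<^sup>2)" by (rule integrable_relative_error)
    show "integrable M (\<lambda>\<omega>. 3 * (1 + (D (h + 1) \<omega>)\<^sup>2 + c\<^sup>2 * (D (h - 1) \<omega>)\<^sup>2) / h\<^sup>2)"
      by (intro integrable_divide integrable_mult_right Bochner_Integration.integrable_add
          integrable_const int)
    show "(emp_h X n \<omega> / h - 1)\<^sup>2 \<le> 3 * (1 + (D (h + 1) \<omega>)\<^sup>2 + c\<^sup>2 * (D (h - 1) \<omega>)\<^sup>2) / h\<^sup>2"
      for \<omega> unfolding h_def D_def c_def p_def by (rule relative_error_pointwise[OF h2])
  qed
  also have "\<dots> = 3 * (1 + expectation (\<lambda>\<omega>. (D (h + 1) \<omega>)\<^sup>2)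
      + c\<^sup>2 * expectation (\<lambda>\<omega>. (D (h - 1) \<omega>)\<^sup>2)) / h\<^sup>2"
    using int by (simp add: prob_space)
  also have "\<dots> \<le> 3 * (1 + real n * surv (h + 1) + c\<^sup>2 * p) / h\<^sup>2"
    using exceedances_mean_square[of n "h + 1"] exceedances_mean_square[of n "h - 1"]
    unfolding D_def p_def by (intro divide_right_mono mult_left_mono add_mono) auto
  also have "\<dots> \<le> 3 * (1 + 2 * h) / h\<^sup>2"
  proof -
    have "c\<^sup>2 * p = (h - 1) * ((h - 1) / p)" using p h2' by (simp add: c_def power2_eq_square)
    also have "\<dots> \<le> h - 1" using p h2' by (intro mult_left_le) auto
    finally show ?thesis using q by (intro divide_right_mono mult_left_mono) auto
  qed
  finally show ?thesis unfolding h_def .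
qed

lemma theo_h_tendsto_infinity:
  assumes surv_pos: "\<And>x. 0 \<le> x \<Longrightarrow> 0 < surv x"
  shows "filterlim (\<lambda>n. theo_h M (X 0) n) at_top sequentially"
  unfolding filterlim_at_top
proof (intro allI)
  fix Z :: real
  define x where "x = max Z 0"
  have p: "0 < surv x" using surv_pos by (simp add: x_def)
  obtain N :: nat where N: "x / surv x \<le> real N" using real_arch_simple by blast
  show "eventually (\<lambda>n. Z \<le> theo_h M (X 0) n) sequentially"
  proof (rule eventually_sequentiallyI[of N])
    fix n assume "N \<le> n"
    interpret T: bounded_antitone "\<lambda>x. real n * surv x" "real n" by (rule bounded_antitone_surv)
    have "x \<le> real N * surv x" using N p by (simp add: field_simps)
    also have "\<dots> \<le> real n * surv x" using \<open>N \<le> n\<close> p by (intro mult_right_mono) auto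
    finally have "x \<le> theo_h M (X 0) n" unfolding theo_h_eq by (intro T.hidx_ge) (auto simp: x_def)
    then show "Z \<le> theo_h M (X 0) n" by (simp add: x_def)
  qed
qed

lemma quadratic_risk_tendsto_zero:
  assumes "\<And>x. 0 \<le> x \<Longrightarrow> 0 < surv x"
  shows "(\<lambda>n. expectation (\<lambda>\<omega>. (emp_h X n \<omega> / theo_h M (X 0) n - 1)\<^sup>2)) \<longlonglongrightarrow> 0"
proof -
  let ?h = "\<lambda>n. theo_h M (X 0) n"
  have h_inf: "filterlim ?h at_top sequentially" by (rule theo_h_tendsto_infinity[OF assms])
  have "((\<lambda>y :: real. 3 * (1 + 2 * y) / y\<^sup>2) \<longlongrightarrow> 0) at_top" by real_asymp
  from filterlim_compose[OF this h_inf]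
  have bound_0: "(\<lambda>n. 3 * (1 + 2 * ?h n) / (?h n)\<^sup>2) \<longlonglongrightarrow> 0" by (simp add: o_def)
  have "eventually (\<lambda>n. 2 \<le> ?h n) sequentially" using h_inf by (simp add: filterlim_at_top)
  then have "eventually (\<lambda>n. expectation (\<lambda>\<omega>. (emp_h X n \<omega> / ?h n - 1)\<^sup>2)
      \<le> 3 * (1 + 2 * ?h n) / (?h n)\<^sup>2) sequentially"
    by eventually_elim (rule quadratic_risk_bound)
  then show ?thesis by (intro tendsto_sandwich[OF _ _ tendsto_const bound_0]) auto
qed

end

text \<open>Since (E Z)^2 \<le> E[Z^2] (nonnegativity of the variance), L^2-convergence to 0 forces
  the means to converge to 0.\<close>
lemma (in prob_space) mean_tendsto_zero_of_mean_square:
  fixes Z :: "nat \<Rightarrow> 'a \<Rightarrow> real"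
  assumes "\<And>n. integrable M (Z n)" "\<And>n. integrable M (\<lambda>\<omega>. (Z n \<omega>)\<^sup>2)"
    and "(\<lambda>n. expectation (\<lambda>\<omega>. (Z n \<omega>)\<^sup>2)) \<longlonglongrightarrow> 0"
  shows "(\<lambda>n. expectation (Z n)) \<longlonglongrightarrow> 0"
proof (rule Lim_null_comparison)
  have "(expectation (Z n))\<^sup>2 \<le> expectation (\<lambda>\<omega>. (Z n \<omega>)\<^sup>2)" for n
    using variance_positive[of "Z n"] variance_eq[OF assms(1,2)] by simp
  then show "eventually (\<lambda>n. norm (expectation (Z n)) \<le> sqrt (expectation (\<lambda>\<omega>. (Z n \<omega>)\<^sup>2))) sequentially"
    by (intro always_eventually allI) (metis real_norm_def real_sqrt_abs real_sqrt_le_mono)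
  show "(\<lambda>n. sqrt (expectation (\<lambda>\<omega>. (Z n \<omega>)\<^sup>2))) \<longlonglongrightarrow> 0"
    using tendsto_real_sqrt[OF assms(3)] by simp
qed

theorem corollary3p2:
  fixes M :: "'a measure" and X :: "nat \<Rightarrow> 'a \<Rightarrow> real"
  assumes "prob_space M"
    and rv: "\<And>i. X i \<in> borel_measurable M"
    and indep: "prob_space.indep_vars M (\<lambda>_. borel) X UNIV"
    and ident: "\<And>i. distr M borel (X i) = distr M borel (X 0)"
    and pos: "AE \<omega> in M. X 0 \<omega> > 0"
    and surv_pos: "\<And>x. x \<ge> 0 \<Longrightarrow> measure M {\<omega> \<in> space M. X 0 \<omega> > x} > 0"
  shows "((\<lambda>n. prob_space.expectation M (\<lambda>\<omega>. (emp_h X n \<omega> / theo_h M (X 0) n - 1)\<^sup>2))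
           \<longlonglongrightarrow> 0) \<and>
         ((\<lambda>n. prob_space.expectation M (emp_h X n) / theo_h M (X 0) n) \<longlonglongrightarrow> 1)"
proof -
  interpret iid_sample M X
    using assms(1) rv indep ident by (intro iid_sample.intro iid_sample_axioms.intro) auto
  let ?h = "\<lambda>n. theo_h M (X 0) n"
  have "0 < surv x" if "0 \<le> x" for x
  proof -
    have "measure M {\<omega> \<in> space M. X 0 \<omega> > x} \<le> surv x"
      unfolding surv_def by (rule finite_measure_mono) auto
    then show ?thesis using surv_pos[OF that] by simp
  qed
  then have risk: "(\<lambda>n. expectation (\<lambda>\<omega>. (emp_h X n \<omega> / ?h n - 1)\<^sup>2)) \<longlonglongrightarrow> 0"
    by (rule quadratic_risk_tendsto_zero)
  have int: "integrable M (\<lambda>\<omega>. emp_h X n \<omega> / ?h n - 1)" for n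
    using integrable_relative_error[of n "?h n" 1] by simp
  have "(\<lambda>n. expectation (\<lambda>\<omega>. emp_h X n \<omega> / ?h n - 1)) \<longlonglongrightarrow> 0"
    by (rule mean_tendsto_zero_of_mean_square[OF int integrable_relative_error risk])
  moreover have "expectation (\<lambda>\<omega>. emp_h X n \<omega> / ?h n - 1) = expectation (emp_h X n) / ?h n - 1"
    for n using integrable_emp_h[of n] by (simp add: prob_space)
  ultimately have "(\<lambda>n. expectation (emp_h X n) / ?h n - 1) \<longlonglongrightarrow> 0" by simp
  with risk show ?thesis by (simp add: LIM_zero_cancel)
qed

end
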